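(* Let $r\geq 1$ and let $\mathcal{H}$ be a family of $r$-uniform (multi)hypergraphs. Then $\mathcal{E}^*_\mathcal{H}(k)=\infty$ for all sufficiently large $k$ if and only if $\mathcal{H}$ contains a sunflower. Furthermore, if $\mathcal{H}$ is a family of simple $r$-uniform hypergraphs, then $\mathcal{E}_\mathcal{H}(k)=\infty$ for all sufficiently large $k$ if and only if $\mathcal{H}$ contains a sunflower.
   Context: An $r$-uniform (multi)hypergraph $H$ is a sunflower if there is a set $S\subseteq V(H)$ (the core) such that every pair of distinct edges $e_1,e_2\in E(H)$ satisfies $e_1\cap e_2=S$. For an $r$-uniform (multi)hypergraph $G$ and family $\mathcal{H}$, $\operatorname{ex}(G,\mathcal{H})$ is the maximum number of edges (with multiplicity) of a sub-multihypergraph of $G$ containing no member of $\mathcal{H}$. $\mathcal{E}_\mathcal{H}(k):=\sup\{e(G): G\text{ simple } r\text{-uniform}, \operatorname{ex}(G,\mathcal{H})<k\}$ and $\mathcal{E}^*_\mathcal{H}(k):=\sup\{e(G): G\text{ an } r\text{-uniform multihypergraph}, \operatorname{ex}(G,\mathcal{H})<k\}$. *)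

theory Defs
  imports Main "HOL-Library.Multiset" "HOL-Library.Extended_Nat"
begin

type_synonym 'a hg = "'a set \<times> 'a set multiset"

definition uniform :: "nat \<Rightarrow> 'a hg \<Rightarrow> bool" where
  "uniform r G \<longleftrightarrow> finite (fst G) \<and> (\<forall>e\<in>#snd G. e \<subseteq> fst G \<and> card e = r)"

definition simple_hg :: "'a hg \<Rightarrow> bool" where
  "simple_hg G \<longleftrightarrow> (\<forall>e. count (snd G) e \<le> 1)"

text \<open>Sunflower: a core S such that any two distinct edges (distinct occurrences
  in the multiset) intersect exactly in S.\<close>
definition sunflower :: "'a hg \<Rightarrow> bool" where
  "sunflower H \<longleftrightarrow> (\<exists>S. S \<subseteq> fst H \<and>
      (\<forall>e1\<in>#snd H. \<forall>e2\<in>#snd H. e1 \<noteq> e2 \<longrightarrow> e1 \<inter> e2 = S) \<and>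
      (\<forall>e. count (snd H) e \<ge> 2 \<longrightarrow> e = S))"

definition contains_copy :: "'a hg \<Rightarrow> 'b hg \<Rightarrow> bool" where
  "contains_copy G F \<longleftrightarrow> (\<exists>f. inj_on f (fst F) \<and> f ` fst F \<subseteq> fst G \<and>
      image_mset ((`) f) (snd F) \<subseteq># snd G)"

definition ex_num :: "'a hg \<Rightarrow> 'b hg set \<Rightarrow> nat" where
  "ex_num G Hs = Sup {size E' | E'. E' \<subseteq># snd G \<and> \<not> (\<exists>F\<in>Hs. contains_copy (fst G, E') F)}"

definition E_star :: "nat \<Rightarrow> 'b hg set \<Rightarrow> nat \<Rightarrow> enat" where
  "E_star r Hs k = Sup {enat (size (snd G)) | G :: nat hg. uniform r G \<and> ex_num G Hs < k}"

definition E_simple :: "nat \<Rightarrow> 'b hg set \<Rightarrow> nat \<Rightarrow> enat" where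
  "E_simple r Hs k = Sup {enat (size (snd G)) | G :: nat hg.
      uniform r G \<and> simple_hg G \<and> ex_num G Hs < k}"

end

theory Submission
  imports Defs "HOL-Library.Disjoint_Sets"
begin

(*
  A copy of a hypergraph inside a sunflower is again a sunflower. So if no member of the family
  is a sunflower, every sunflower sub-multiset of the host is free, and has fewer than k edges
  once ex < k. But a uniform host with more than r! k^r k edges contains a sunflower with k
  edges: either some edge has multiplicity k, or there are more than r! k^r distinct edges and
  the Erdos-Rado lemma applies. Hence the hosts have bounded size.

  Conversely, let F be a sunflower in the family with t edges; when t >= 2 its core lies in
  every edge. Take as host the sunflower with m edges whose core and petals have the sizes of
  those of F. Mapping the core of F onto the core of the host and its petals onto any t petals
  of the host embeds F into any t edges of the host, so ex < t + 1 for every m. If F is simple,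
  its petals are nonempty, hence so are those of the host, which is then simple too.
*)

section \<open>The Erdos--Rado sunflower lemma\<close>

definition sunflower_family :: "'a set set \<Rightarrow> bool" where
  "sunflower_family D \<longleftrightarrow> (\<exists>S. \<forall>A\<in>D. \<forall>B\<in>D. A \<noteq> B \<longrightarrow> A \<inter> B = S)"

lemma disjoint_subfamily_if_degree_bounded:
  assumes "finite F" "{} \<notin> F" "\<forall>A\<in>F. finite A \<and> card A \<le> R"
    and "\<forall>x. card {A\<in>F. x \<in> A} \<le> M" "j * (R * M) < card F"
  shows "\<exists>D\<subseteq>F. card D = Suc j \<and> (\<forall>A\<in>D. \<forall>B\<in>D. A \<noteq> B \<longrightarrow> A \<inter> B = {})"
  using assms
proof (induction j arbitrary: F)
  case 0
  then obtain A where "A \<in> F" by fastforce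
  then show ?case by (intro exI[of _ "{A}"]) auto
next
  case (Suc j)
  then obtain A where A: "A \<in> F" by fastforce
  define F' where "F' = {B\<in>F. A \<inter> B = {}}"
  have "card {B\<in>F. A \<inter> B \<noteq> {}} \<le> (\<Sum>x\<in>A. card {B\<in>F. x \<in> B})"
  proof -
    have "{B\<in>F. A \<inter> B \<noteq> {}} = (\<Union>x\<in>A. {B\<in>F. x \<in> B})" by blast
    then show ?thesis using A Suc.prems(1,3) by (simp add: card_UN_le)
  qed
  also have "\<dots> \<le> card A * M"
    using Suc.prems(4) by (intro sum_bounded_above[of A _ M, simplified]) simp
  also have "\<dots> \<le> R * M" using A Suc.prems(3) by simp
  finally have "card {B\<in>F. A \<inter> B \<noteq> {}} \<le> R * M" .
  moreover have "card F \<le> card F' + card {B\<in>F. A \<inter> B \<noteq> {}}"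
  proof -
    have "F = F' \<union> {B\<in>F. A \<inter> B \<noteq> {}}" unfolding F'_def by blast
    then show ?thesis by (metis card_Un_le)
  qed
  ultimately have "j * (R * M) < card F'" using Suc.prems(5) by simp
  moreover have "\<forall>x. card {B\<in>F'. x \<in> B} \<le> M"
  proof
    fix x
    have "card {B\<in>F'. x \<in> B} \<le> card {B\<in>F. x \<in> B}"
      using Suc.prems(1) by (intro card_mono) (auto simp: F'_def)
    then show "card {B\<in>F'. x \<in> B} \<le> M" using Suc.prems(4) le_trans by blast
  qed
  ultimately obtain D where D: "D \<subseteq> F'" "card D = Suc j"
    "\<forall>X\<in>D. \<forall>Y\<in>D. X \<noteq> Y \<longrightarrow> X \<inter> Y = {}"
    using Suc.IH[of F'] Suc.prems(1-3) unfolding F'_def by auto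
  have "A \<notin> D" using D(1) A Suc.prems(2) unfolding F'_def by auto
  then have "card (insert A D) = Suc (Suc j)"
    using D(2) by (metis card.infinite card_insert_disjoint nat.distinct(1))
  then show ?case
    using A D(1,3) unfolding F'_def by (intro exI[of _ "insert A D"]) auto
qed

lemma Erdos_Rado_sunflower:
  assumes "finite F" "\<forall>A\<in>F. finite A \<and> card A = r" "fact r * k ^ r < card F"
  shows "\<exists>D\<subseteq>F. k \<le> card D \<and> sunflower_family D"
  using assms
proof (induction r arbitrary: F)
  case 0
  then have "F \<subseteq> {{}}" by auto
  then have "card F \<le> 1" using card_mono[of "{{}}" F] by simp
  with 0 show ?case by simp
next
  case (Suc r)
  show ?case
  proof (cases "\<exists>x. fact r * k ^ r < card {A\<in>F. x \<in> A}")
    case True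
    then obtain x where x: "fact r * k ^ r < card {A\<in>F. x \<in> A}" by blast
    define G where "G = (\<lambda>A. A - {x}) ` {A\<in>F. x \<in> A}"
    have "inj_on (\<lambda>A. A - {x}) {A\<in>F. x \<in> A}"
    proof (rule inj_onI)
      fix A B assume "A \<in> {A\<in>F. x \<in> A}" "B \<in> {A\<in>F. x \<in> A}" "A - {x} = B - {x}"
      then show "A = B" by (metis insert_Diff mem_Collect_eq)
    qed
    then have "fact r * k ^ r < card G" using x by (simp add: G_def card_image)
    moreover have "finite G" using Suc.prems(1) by (simp add: G_def)
    moreover have "\<forall>A\<in>G. finite A \<and> card A = r" using Suc.prems(2) by (auto simp: G_def)
    ultimately have "\<exists>D\<subseteq>G. k \<le> card D \<and> sunflower_family D" by (intro Suc.IH)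
    then obtain D S where
      D: "D \<subseteq> G" "k \<le> card D" "\<forall>A\<in>D. \<forall>B\<in>D. A \<noteq> B \<longrightarrow> A \<inter> B = S"
      unfolding sunflower_family_def by blast
    have x_notin: "x \<notin> A" if "A \<in> D" for A using D(1) that by (auto simp: G_def)
    have "insert x ` D \<subseteq> F"
    proof
      fix Y assume "Y \<in> insert x ` D"
      then obtain A where "A \<in> F" "x \<in> A" "Y = insert x (A - {x})"
        using D(1) by (auto simp: G_def)
      then show "Y \<in> F" by (simp add: insert_absorb)
    qed
    moreover have "inj_on (insert x) D"
      by (rule inj_onI) (metis Diff_insert_absorb x_notin)
    then have "k \<le> card (insert x ` D)" using D(2) by (simp add: card_image)
    moreover have "sunflower_family (insert x ` D)"
      unfolding sunflower_family_def using D(3) by (intro exI[of _ "insert x S"]) auto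
    ultimately show ?thesis by blast
  next
    case False
    then have degree: "\<forall>x. card {A\<in>F. x \<in> A} \<le> fact r * k ^ r" by (simp add: not_less)
    have many: "k * (Suc r * (fact r * k ^ r)) < card F"
      using Suc.prems(3) by (simp add: algebra_simps)
    have "{} \<notin> F" "\<forall>A\<in>F. finite A \<and> card A \<le> Suc r"
      using Suc.prems(2) by fastforce+
    then obtain D where
      "D \<subseteq> F" "card D = Suc k" "\<forall>A\<in>D. \<forall>B\<in>D. A \<noteq> B \<longrightarrow> A \<inter> B = {}"
      using disjoint_subfamily_if_degree_bounded[OF Suc.prems(1) _ _ degree many] by blast
    then show ?thesis unfolding sunflower_family_def by (intro exI[of _ D]) auto
  qed
qed

section \<open>Sunflower-free families\<close>

lemma sunflower_replicate_mset:
  assumes "e \<subseteq> V"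
  shows "sunflower (V, replicate_mset k e)"
  unfolding sunflower_def using assms by (intro exI[of _ e]) simp

lemma sunflower_mset_set:
  assumes "finite D" "sunflower_family D" "\<forall>A\<in>D. A \<subseteq> V"
  shows "sunflower (V, mset_set D)"
proof -
  obtain S where S: "\<forall>A\<in>D. \<forall>B\<in>D. A \<noteq> B \<longrightarrow> A \<inter> B = S"
    using assms(2) unfolding sunflower_family_def by blast
  have "\<forall>A\<in>D. \<forall>B\<in>D. A \<noteq> B \<longrightarrow> A \<inter> B = S \<inter> V" using S assms(3) by blast
  moreover have "\<not> 2 \<le> count (mset_set D) e" for e by (simp add: count_mset_set')
  ultimately show ?thesis
    unfolding sunflower_def using assms(1) by (intro exI[of _ "S \<inter> V"]) simp
qed

lemma uniform_contains_large_sunflower: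
  assumes "uniform r G" "fact r * k ^ r * k < size (snd G)"
  shows "\<exists>E. E \<subseteq># snd G \<and> k \<le> size E \<and> sunflower (fst G, E)"
proof (cases "\<exists>e\<in>#snd G. k \<le> count (snd G) e")
  case True
  then obtain e where "e \<in># snd G" and e: "k \<le> count (snd G) e" by blast
  then have "e \<subseteq> fst G" using assms(1) unfolding uniform_def by blast
  then show ?thesis using e
    by (intro exI[of _ "replicate_mset k e"]) (auto simp: count_le_replicate_mset_subset_eq
        sunflower_replicate_mset)
next
  case False
  have "size (snd G) = (\<Sum>e\<in>set_mset (snd G). count (snd G) e)"
    by (rule size_multiset_overloaded_eq)
  also have "\<dots> \<le> card (set_mset (snd G)) * k"
    using False sum_bounded_above[of "set_mset (snd G)" "count (snd G)" k] by force
  finally have "fact r * k ^ r * k < card (set_mset (snd G)) * k" using assms(2) by linarith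
  then have "fact r * k ^ r < card (set_mset (snd G))" by simp
  moreover have "\<forall>A\<in>set_mset (snd G). finite A \<and> card A = r"
    using assms(1) unfolding uniform_def by (meson finite_subset)
  ultimately obtain D where D: "D \<subseteq> set_mset (snd G)" "k \<le> card D" "sunflower_family D"
    using Erdos_Rado_sunflower[OF finite_set_mset] by blast
  have "finite D" using D(1) finite_subset by blast
  have "mset_set D \<subseteq># mset_set (set_mset (snd G))"
    using D(1) by (simp add: subset_imp_msubset_mset_set)
  also have "\<dots> \<subseteq># snd G" by (rule mset_set_set_mset_msubset)
  finally have "mset_set D \<subseteq># snd G" .
  moreover have "sunflower (fst G, mset_set D)"
    using sunflower_mset_set[OF \<open>finite D\<close> D(3)] D(1) assms(1) unfolding uniform_def by auto
  ultimately show ?thesis using D(2) by (intro exI[of _ "mset_set D"]) auto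
qed

lemma sunflower_if_contains_copy:
  assumes "sunflower H" "contains_copy H F" "\<forall>e\<in>#snd F. e \<subseteq> fst F"
  shows "sunflower F"
proof -
  obtain f where f: "inj_on f (fst F)" "image_mset ((`) f) (snd F) \<subseteq># snd H"
    using assms(2) unfolding contains_copy_def by blast
  obtain S where S: "\<forall>e1\<in>#snd H. \<forall>e2\<in>#snd H. e1 \<noteq> e2 \<longrightarrow> e1 \<inter> e2 = S"
    "\<forall>e. 2 \<le> count (snd H) e \<longrightarrow> e = S"
    using assms(1) unfolding sunflower_def by blast
  have image_in: "f ` e \<in># snd H" if "e \<in># snd F" for e
    using that by (intro mset_subset_eqD[OF f(2)]) simp
  have preimage: "e = {v\<in>fst F. f v \<in> f ` e}" if "e \<in># snd F" for e
    using that assms(3) by (blast dest: inj_onD[OF f(1)])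
  define S' where "S' = {v\<in>fst F. f v \<in> S}"
  have inter: "e1 \<inter> e2 = S'" if "e1 \<in># snd F" "e2 \<in># snd F" "e1 \<noteq> e2" for e1 e2
  proof -
    have "f ` e1 \<noteq> f ` e2" using that assms(3) f(1) by (metis inj_on_image_eq_iff)
    then have "f ` e1 \<inter> f ` e2 = S"
      using S(1) image_in[OF that(1)] image_in[OF that(2)] by simp
    moreover have "e1 \<inter> e2 = {v\<in>fst F. f v \<in> f ` e1 \<inter> f ` e2}"
      using preimage[OF that(1)] preimage[OF that(2)] by blast
    ultimately show ?thesis unfolding S'_def by simp
  qed
  have multiple: "e = S'" if "2 \<le> count (snd F) e" for e
  proof -
    have "replicate_mset 2 e \<subseteq># snd F"
      using that by (simp add: count_le_replicate_mset_subset_eq)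
    then have "image_mset ((`) f) (replicate_mset 2 e) \<subseteq># image_mset ((`) f) (snd F)"
      by (rule image_mset_subseteq_mono)
    also note f(2)
    finally have "f ` e = S" using S(2) by (simp add: count_le_replicate_mset_subset_eq)
    moreover have "e \<in># snd F" using that not_in_iff[of e "snd F"] by auto
    ultimately show ?thesis using preimage unfolding S'_def by blast
  qed
  have "S' \<subseteq> fst F" unfolding S'_def by blast
  then show ?thesis unfolding sunflower_def using inter multiple by blast
qed

lemma size_le_ex_num:
  assumes "E \<subseteq># snd G" "\<not> (\<exists>F\<in>Hs. contains_copy (fst G, E) F)"
  shows "size E \<le> ex_num G Hs"
  unfolding ex_num_def
proof (rule cSup_upper)
  show "bdd_above {size E |E. E \<subseteq># snd G \<and> \<not> (\<exists>F\<in>Hs. contains_copy (fst G, E) F)}"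
    by (rule bdd_aboveI[of _ "size (snd G)"]) (auto intro: size_mset_mono)
qed (use assms in blast)

lemma ex_num_le_if_larger_contain_copy:
  assumes "\<And>E. E \<subseteq># snd G \<Longrightarrow> t < size E \<Longrightarrow> \<exists>F\<in>Hs. contains_copy (fst G, E) F"
  shows "ex_num G Hs \<le> t"
proof -
  let ?X = "{size E |E. E \<subseteq># snd G \<and> \<not> (\<exists>F\<in>Hs. contains_copy (fst G, E) F)}"
  have bound: "x \<le> t" if "x \<in> ?X" for x using assms that by (auto simp: not_less[symmetric])
  show ?thesis
  proof (cases "?X = {}")
    case True
    then show ?thesis unfolding ex_num_def True by (simp add: Sup_nat_def)
  next
    case False
    then show ?thesis unfolding ex_num_def using bound by (rule cSup_least)
  qed
qed

lemma size_le_if_sunflower_free: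
  assumes "\<forall>F\<in>Hs. uniform r F" "\<not> (\<exists>F\<in>Hs. sunflower F)" "uniform r G" "ex_num G Hs < k"
  shows "size (snd G) \<le> fact r * k ^ r * k"
proof (rule ccontr)
  assume "\<not> ?thesis"
  then obtain E where E: "E \<subseteq># snd G" "k \<le> size E" "sunflower (fst G, E)"
    using uniform_contains_large_sunflower[OF assms(3)] by (auto simp: not_le)
  have "\<not> contains_copy (fst G, E) F" if "F \<in> Hs" for F
    using sunflower_if_contains_copy[OF E(3)] assms(1,2) that unfolding uniform_def by blast
  then have "size E \<le> ex_num G Hs" using size_le_ex_num[OF E(1)] by blast
  with E(2) assms(4) show False by simp
qed

lemma E_star_le_if_sunflower_free:
  assumes "\<forall>F\<in>Hs. uniform r F" "\<not> (\<exists>F\<in>Hs. sunflower F)"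
  shows "E_star r Hs k \<le> enat (fact r * k ^ r * k)"
  unfolding E_star_def using size_le_if_sunflower_free[OF assms] by (auto intro!: Sup_least)

lemma E_simple_le_E_star: "E_simple r Hs k \<le> E_star r Hs k"
  unfolding E_simple_def E_star_def by (rule Sup_subset_mono) blast

lemma submultiset_image_mset:
  "M \<subseteq># image_mset f N \<Longrightarrow> \<exists>N'. N' \<subseteq># N \<and> M = image_mset f N'"
proof (induction N arbitrary: M)
  case empty
  then show ?case by simp
next
  case (add b N)
  show ?case
  proof (cases "f b \<in># M")
    case True
    have "M - {#f b#} \<subseteq># image_mset f N"
      using add.prems by (simp add: subset_eq_diff_conv)
    then obtain N' where "N' \<subseteq># N" "M - {#f b#} = image_mset f N'" using add.IH by blast
    moreover have "M = add_mset (f b) (M - {#f b#})" using True by simp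
    ultimately show ?thesis by (intro exI[of _ "add_mset b N'"]) auto
  next
    case False
    then have "M \<subseteq># image_mset f N"
      using add.prems by (simp add: inter_add_left1 subset_mset.inf.absorb_iff2)
    then obtain N' where "N' \<subseteq># N" "M = image_mset f N'" using add.IH by blast
    moreover have "N \<subseteq># add_mset b N" by simp
    ultimately show ?thesis using subset_mset.order_trans by blast
  qed
qed

lemma submultiset_mset_set:
  assumes "M \<subseteq># mset_set A"
  shows "M = mset_set (set_mset M)"
proof (rule multiset_eqI)
  fix x
  have "count M x \<le> 1"
    using mset_subset_eq_count[OF assms, of x] by (auto simp: count_mset_set' split: if_splits)
  then show "count M x = count (mset_set (set_mset M)) x"
    by (metis count_greater_eq_one_iff count_inI count_mset_set(1,3) finite_set_mset
        order_antisym_conv)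
qed

lemma bij_betw_UN_piecewise:
  assumes "disjoint_family_on A I" "disjoint_family_on B I"
    and "\<And>i. i \<in> I \<Longrightarrow> bij_betw (h i) (A i) (B i)"
  shows "\<exists>g. bij_betw g (\<Union>i\<in>I. A i) (\<Union>i\<in>I. B i) \<and> (\<forall>i\<in>I. \<forall>x\<in>A i. g x = h i x)"
proof -
  define g where "g x = h (THE i. i \<in> I \<and> x \<in> A i) x" for x
  have g: "g x = h i x" if "i \<in> I" "x \<in> A i" for i x
  proof -
    have "(THE i. i \<in> I \<and> x \<in> A i) = i"
      using assms(1) that by (auto simp: disjoint_family_on_def)
    then show ?thesis by (simp add: g_def)
  qed
  then have "bij_betw g (A i) (B i)" if "i \<in> I" for i
    using assms(3)[OF that] g[OF that] bij_betw_cong by blast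
  then show ?thesis using g bij_betw_UNION_disjoint[OF assms(2)] by blast
qed

lemma inj_on_extend_disjoint:
  assumes "inj_on f W" "W \<subseteq> V" "finite V" "finite B" "card V \<le> card B" "f ` W \<inter> B = {}"
  shows "\<exists>g. inj_on g V \<and> g ` V \<subseteq> f ` W \<union> B \<and> (\<forall>x\<in>W. g x = f x)"
proof -
  have "card (V - W) \<le> card B" using assms(3,5) by (meson Diff_subset card_mono le_trans)
  then obtain \<theta> where \<theta>: "inj_on \<theta> (V - W)" "\<theta> ` (V - W) \<subseteq> B"
    using card_le_inj[of "V - W" B] assms(3,4) by blast
  have "inj_on (\<lambda>x. if x \<in> W then f x else \<theta> x) (W \<union> (V - W))"
    using \<theta> assms(1,6) by (intro inj_on_disjoint_Un) auto
  moreover have "W \<union> (V - W) = V" using assms(2) by blast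
  ultimately show ?thesis
    using \<theta>(2) by (intro exI[of _ "\<lambda>x. if x \<in> W then f x else \<theta> x"]) auto
qed

lemma count_mset_ge_2_if_nth_eq:
  assumes "i < length xs" "j < length xs" "i \<noteq> j" "xs ! i = xs ! j"
  shows "2 \<le> count (mset xs) (xs ! i)"
proof -
  have "count (mset xs) (xs ! i) = length (filter (HOL.eq (xs ! i)) xs)"
    by (metis length_replicate replicate_count_mset_eq_filter_eq)
  also have "\<dots> = card {k. k < length xs \<and> xs ! i = xs ! k}"
    by (rule length_filter_conv_card)
  finally have "count (mset xs) (xs ! i) = card {k. k < length xs \<and> xs ! i = xs ! k}" .
  moreover have "{i, j} \<subseteq> {k. k < length xs \<and> xs ! i = xs ! k}" using assms by auto
  then have "card {i, j} \<le> card {k. k < length xs \<and> xs ! i = xs ! k}" by (intro card_mono) auto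
  ultimately show ?thesis using assms(3) by simp
qed

lemma image_mset_mset_eq_mset_set:
  assumes "\<And>i. i < length xs \<Longrightarrow> f (xs ! i) = h (\<sigma> i)" "inj_on \<sigma> {..<length xs}"
  shows "image_mset f (mset xs) = image_mset h (mset_set (\<sigma> ` {..<length xs}))"
proof -
  have "map f xs = map h (map \<sigma> [0..<length xs])"
    using assms(1) by (intro nth_equalityI) simp_all
  then have "image_mset f (mset xs) = image_mset h (mset (map \<sigma> [0..<length xs]))"
    by (simp flip: mset_map)
  also have "mset (map \<sigma> [0..<length xs]) = mset_set (\<sigma> ` {..<length xs})"
    using assms(2) by (simp add: image_mset_mset_set atLeast0LessThan)
  finally show ?thesis .
qed

lemma disjoint_family_blocks:
  fixes a p :: nat
  shows "disjoint_family (\<lambda>j. {a + j * p..<a + j * p + p})"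
proof -
  have "{a + j * p..<a + j * p + p} \<inter> {a + j' * p..<a + j' * p + p} = {}" if "j < j'" for j j'
    using mult_le_mono1[of "Suc j" j' p] that by auto
  then show ?thesis
    unfolding disjoint_family_on_def
    by (intro ballI impI) (metis Int_commute linorder_neqE_nat)
qed

lemma bij_betw_petals_blocks:
  fixes a p :: nat
  assumes "disjoint_family_on P I" "\<And>i. i \<in> I \<Longrightarrow> finite (P i) \<and> card (P i) = p"
    and "inj_on \<sigma> I"
  shows "\<exists>g. bij_betw g (\<Union>i\<in>I. P i) (\<Union>i\<in>I. {a + \<sigma> i * p..<a + \<sigma> i * p + p}) \<and>
           (\<forall>i\<in>I. g ` P i = {a + \<sigma> i * p..<a + \<sigma> i * p + p})"
proof -
  have "\<exists>h. bij_betw h (P i) {a + \<sigma> i * p..<a + \<sigma> i * p + p}" if "i \<in> I" for i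
    using assms(2)[OF that] by (intro finite_same_card_bij) auto
  then obtain h
    where h: "\<And>i. i \<in> I \<Longrightarrow> bij_betw (h i) (P i) {a + \<sigma> i * p..<a + \<sigma> i * p + p}"
    by metis
  have "disjoint_family_on (\<lambda>i. {a + \<sigma> i * p..<a + \<sigma> i * p + p}) I"
  proof (unfold disjoint_family_on_def, intro ballI impI)
    fix i i' assume "i \<in> I" "i' \<in> I" "i \<noteq> i'"
    then have "\<sigma> i \<noteq> \<sigma> i'" using assms(3) by (meson inj_onD)
    then show
      "{a + \<sigma> i * p..<a + \<sigma> i * p + p} \<inter> {a + \<sigma> i' * p..<a + \<sigma> i' * p + p} = {}"
      using disjoint_family_blocks[of a p] unfolding disjoint_family_on_def by blast
  qed
  then obtain g
    where g: "bij_betw g (\<Union>i\<in>I. P i) (\<Union>i\<in>I. {a + \<sigma> i * p..<a + \<sigma> i * p + p})"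
      "\<forall>i\<in>I. \<forall>x\<in>P i. g x = h i x"
    using bij_betw_UN_piecewise[OF assms(1) _ h] by blast
  have "g ` P i = {a + \<sigma> i * p..<a + \<sigma> i * p + p}" if "i \<in> I" for i
  proof -
    have "g ` P i = h i ` P i" using g(2) that by simp
    then show ?thesis using h[OF that] by (simp add: bij_betw_def)
  qed
  then show ?thesis using g(1) by blast
qed

section \<open>Blown-up sunflowers\<close>

text \<open>The core of a sunflower with at most one edge is arbitrary; a kernel is a core that
  lies inside every edge.\<close>

definition sunflower_kernel :: "'a hg \<Rightarrow> 'a set \<Rightarrow> bool" where
  "sunflower_kernel F T \<longleftrightarrow> T \<subseteq> fst F \<and> (\<forall>e\<in>#snd F. T \<subseteq> e) \<and>
     (\<forall>e1\<in>#snd F. \<forall>e2\<in>#snd F. e1 \<noteq> e2 \<longrightarrow> e1 \<inter> e2 \<subseteq> T) \<and>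
     (\<forall>e. 2 \<le> count (snd F) e \<longrightarrow> e \<subseteq> T)"

lemma sunflower_kernel_exists:
  assumes "sunflower F" "uniform r F" "1 \<le> r"
  shows "\<exists>T. sunflower_kernel F T \<and> card T \<le> r \<and> (simple_hg F \<longrightarrow> card T < r)"
proof -
  obtain S where S: "S \<subseteq> fst F" "\<forall>e1\<in>#snd F. \<forall>e2\<in>#snd F. e1 \<noteq> e2 \<longrightarrow> e1 \<inter> e2 = S"
    "\<forall>e. 2 \<le> count (snd F) e \<longrightarrow> e = S"
    using assms(1) unfolding sunflower_def by blast
  show ?thesis
  proof (cases "size (snd F) \<le> 1")
    case True
    then have "snd F = {#} \<or> (\<exists>a. snd F = {#a#})"
      using le_Suc_eq[of "size (snd F)" 0] size_1_singleton_mset[of "snd F"] by auto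
    moreover have "\<not> 2 \<le> count (snd F) e" for e
      using True count_le_size[of "snd F" e] by linarith
    ultimately have "sunflower_kernel F {}"
      unfolding sunflower_kernel_def by (elim disjE exE) (simp_all add: not_le)
    then show ?thesis using assms(3) by (intro exI[of _ "{}"]) simp
  next
    case False
    have partner: "\<exists>e'. e' \<in># snd F \<and> (e' \<noteq> e \<or> 2 \<le> count (snd F) e)"
      if "e \<in># snd F" for e
    proof -
      have "size (snd F - {#e#}) \<noteq> 0" using False that by (simp add: size_Diff_singleton)
      then obtain e' where e': "e' \<in># snd F - {#e#}" by (metis multiset_nonemptyE size_empty)
      then have "e' \<in># snd F" by (rule in_diffD)
      moreover have "2 \<le> count (snd F) e" if "e' = e"
        using e' that by (simp add: in_diff_count)
      ultimately show ?thesis by blast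
    qed
    have S_sub: "S \<subseteq> e" if "e \<in># snd F" for e
      using partner[OF that] S(2,3) that by blast
    have "sunflower_kernel F S" unfolding sunflower_kernel_def using S S_sub by auto
    moreover obtain e where e: "e \<in># snd F" using False by fastforce
    then have "finite e" "card e = r"
      using assms(2) unfolding uniform_def by (auto intro: finite_subset)
    then have "card S \<le> r" using S_sub[OF e] card_mono by metis
    moreover have "card S < r" if "simple_hg F"
    proof -
      have "\<not> 2 \<le> count (snd F) e"
        using that unfolding simple_hg_def
        by (metis le_trans one_le_numeral numeral_le_one_iff semiring_norm(69))
      then obtain e' where e': "e' \<in># snd F" "e' \<noteq> e" using partner[OF e] by blast
      have "finite e'" "card e' = r"
        using assms(2) e'(1) unfolding uniform_def by (auto intro: finite_subset)
      have "S = e \<inter> e'" using S(2) e e' by blast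
      then show ?thesis
        using \<open>card S \<le> r\<close> \<open>finite e\<close> \<open>card e = r\<close> \<open>finite e'\<close> \<open>card e' = r\<close> e'(2)
        by (metis card_subset_eq inf.cobounded1 inf.cobounded2 order_le_less)
    qed
    ultimately show ?thesis by blast
  qed
qed

text \<open>The sunflower with core \<open>{..<c}\<close> and \<open>m\<close> consecutive petals of size \<open>p\<close>, and
  \<open>q\<close> further vertices to receive the vertices of an embedded hypergraph that lie in no edge.\<close>

definition block_edge :: "nat \<Rightarrow> nat \<Rightarrow> nat \<Rightarrow> nat set" where
  "block_edge c p j = {..<c} \<union> {c + j * p..<c + j * p + p}"

definition block_sunflower :: "nat \<Rightarrow> nat \<Rightarrow> nat \<Rightarrow> nat \<Rightarrow> nat hg" where
  "block_sunflower c p m q =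
     ({..<c + m * p + q}, image_mset (block_edge c p) (mset_set {..<m}))"

lemma block_edge_subset: "j < m \<Longrightarrow> block_edge c p j \<subseteq> {..<c + m * p + q}"
  using mult_le_mono1[of "Suc j" m p] unfolding block_edge_def by auto

lemma card_block_edge: "card (block_edge c p j) = c + p"
  unfolding block_edge_def by (subst card_Un_disjoint) auto

lemma inj_block_edge:
  assumes "0 < p"
  shows "inj (block_edge c p)"
proof -
  have "j' \<le> j" if "block_edge c p j = block_edge c p j'" for j j'
  proof -
    have "c + j * p \<in> block_edge c p j" using assms by (simp add: block_edge_def)
    then have "c + j * p \<in> block_edge c p j'" using that by simp
    then have "j' * p \<le> j * p" unfolding block_edge_def by auto
    then show ?thesis using assms by simp
  qed
  then show ?thesis by (intro injI) (metis antisym)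
qed

lemma uniform_block_sunflower: "uniform (c + p) (block_sunflower c p m q)"
  unfolding uniform_def block_sunflower_def using block_edge_subset card_block_edge by auto

lemma size_block_sunflower: "size (snd (block_sunflower c p m q)) = m"
  by (simp add: block_sunflower_def)

lemma simple_block_sunflower:
  assumes "0 < p"
  shows "simple_hg (block_sunflower c p m q)"
proof -
  have "snd (block_sunflower c p m q) = mset_set (block_edge c p ` {..<m})"
    using inj_block_edge[OF assms, of c]
    by (simp add: block_sunflower_def image_mset_mset_set inj_on_subset)
  then show ?thesis unfolding simple_hg_def by (simp add: count_mset_set')
qed

lemma sunflower_kernel_nth_inter:
  assumes "sunflower_kernel (V, mset es) T" "i < length es" "j < length es" "i \<noteq> j"
  shows "es ! i \<inter> es ! j \<subseteq> T"
proof (cases "es ! i = es ! j")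
  case True
  then have "2 \<le> count (mset es) (es ! i)" using count_mset_ge_2_if_nth_eq assms(2-4) by blast
  then show ?thesis using assms(1) True unfolding sunflower_kernel_def by auto
next
  case False
  then show ?thesis using assms(1-3) unfolding sunflower_kernel_def by simp
qed

lemma contains_copy_block_edges:
  fixes F :: "'a hg"
  assumes "uniform (card T + p) F" "sunflower_kernel F T"
    and "J \<subseteq> {..<m}" "size (snd F) \<le> card J" "card (fst F) \<le> q"
  shows "contains_copy ({..<card T + m * p + q}, image_mset (block_edge (card T) p) (mset_set J)) F"
proof -
  obtain es where es: "snd F = mset es" by (metis ex_mset)
  define c t V where "c = card T" and "t = length es" and "V = fst F"
  have F: "F = (V, mset es)" using es by (simp add: V_def prod_eq_iff)
  have fV: "finite V" using assms(1) by (simp add: uniform_def V_def)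
  have TV: "T \<subseteq> V" using assms(2) by (simp add: sunflower_kernel_def V_def)
  have fT: "finite T" using fV TV finite_subset by blast
  have edge: "T \<subseteq> es ! i \<and> es ! i \<subseteq> V \<and> card (es ! i) = c + p" if "i < t" for i
  proof -
    have "es ! i \<in># snd F" using that es by (simp add: t_def)
    then show ?thesis using assms(1,2) by (simp add: uniform_def sunflower_kernel_def V_def c_def)
  qed
  define P where "P i = es ! i - T" for i
  have "disjoint_family_on P {..<t}"
    using sunflower_kernel_nth_inter assms(2) unfolding F P_def t_def disjoint_family_on_def
    by fastforce
  moreover have "finite (P i) \<and> card (P i) = p" if "i \<in> {..<t}" for i
    using edge[of i] that fT fV by (auto simp: P_def card_Diff_subset c_def intro: finite_subset)
  moreover obtain \<sigma> where \<sigma>: "inj_on \<sigma> {..<t}" "\<sigma> ` {..<t} \<subseteq> J"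
    using card_le_inj[of "{..<t}" J] assms(3,4) es by (auto simp: t_def intro: finite_subset)
  ultimately obtain g where g: "bij_betw g (\<Union>i<t. P i) (\<Union>i<t. {c + \<sigma> i * p..<c + \<sigma> i * p + p})"
    "\<forall>i<t. g ` P i = {c + \<sigma> i * p..<c + \<sigma> i * p + p}"
    using bij_betw_petals_blocks[of P "{..<t}" p \<sigma> c] by auto
  obtain \<phi> where \<phi>: "bij_betw \<phi> T {..<c}"
    using ex_bij_betw_finite_nat[OF fT] by (auto simp: c_def atLeast0LessThan)
  define W where "W = T \<union> (\<Union>i<t. P i)"
  define f0 where "f0 x = (if x \<in> T then \<phi> x else g x)" for x
  have "bij_betw f0 W ({..<c} \<union> (\<Union>i<t. {c + \<sigma> i * p..<c + \<sigma> i * p + p}))"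
    unfolding W_def f0_def by (rule bij_betw_disjoint_Un[OF \<phi> g(1)]) (auto simp: P_def)
  moreover have "{..<c} \<union> (\<Union>i<t. {c + \<sigma> i * p..<c + \<sigma> i * p + p}) \<subseteq> {..<c + m * p}"
  proof -
    have "\<sigma> i * p + p \<le> m * p" if "i < t" for i
    proof -
      have "\<sigma> i \<in> {..<m}" using \<sigma>(2) assms(3) that by blast
      then have "Suc (\<sigma> i) \<le> m" by simp
      then show ?thesis using mult_le_mono1[of "Suc (\<sigma> i)" m p] by simp
    qed
    then show ?thesis by force
  qed
  ultimately have f0: "inj_on f0 W" "f0 ` W \<subseteq> {..<c + m * p}"
    by (auto simp: bij_betw_def)
  have WV: "W \<subseteq> V" using edge TV unfolding W_def P_def by blast
  have card_V: "card V \<le> card {c + m * p..<c + m * p + q}" using assms(5) by (simp add: V_def)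
  have "f0 ` W \<inter> {c + m * p..<c + m * p + q} = {}" using f0(2) by auto
  then obtain f where f: "inj_on f V" "f ` V \<subseteq> f0 ` W \<union> {c + m * p..<c + m * p + q}"
    "\<forall>x\<in>W. f x = f0 x"
    using inj_on_extend_disjoint[OF f0(1) WV fV finite_atLeastLessThan card_V] by blast
  have "f0 ` W \<union> {c + m * p..<c + m * p + q} \<subseteq> {..<c + m * p + q}" using f0(2) by auto
  with f(2) have "f ` V \<subseteq> {..<c + m * p + q}" by (rule order_trans)
  moreover have "f ` (es ! i) = block_edge c p (\<sigma> i)" if "i < t" for i
  proof -
    have "es ! i = T \<union> P i" using edge[OF that] by (auto simp: P_def)
    moreover have "f ` T = {..<c}"
    proof -
      have "f ` T = \<phi> ` T" using f(3) by (intro image_cong) (auto simp: W_def f0_def)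
      then show ?thesis using \<phi> by (simp add: bij_betw_def)
    qed
    moreover have "f ` P i = g ` P i"
    proof (rule image_cong)
      fix x assume "x \<in> P i"
      then have "x \<in> W" "x \<notin> T" using that by (auto simp: W_def P_def)
      then show "f x = g x" using f(3) by (simp add: f0_def)
    qed simp
    ultimately show ?thesis using g(2) that by (simp add: block_edge_def image_Un)
  qed
  then have "image_mset ((`) f) (mset es) = image_mset (block_edge c p) (mset_set (\<sigma> ` {..<t}))"
    using \<sigma>(1) unfolding t_def by (rule image_mset_mset_eq_mset_set)
  moreover have "mset_set (\<sigma> ` {..<t}) \<subseteq># mset_set J"
    using \<sigma>(2) assms(3) by (simp add: finite_subset)
  ultimately show ?thesis
    unfolding contains_copy_def F c_def
    by (intro exI[of _ f]) (simp add: f(1) image_mset_subseteq_mono)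
qed

lemma ex_num_block_sunflower_le:
  assumes "F \<in> Hs" "uniform (card T + p) F" "sunflower_kernel F T" "card (fst F) \<le> q"
  shows "ex_num (block_sunflower (card T) p m q) Hs \<le> size (snd F)"
proof (rule ex_num_le_if_larger_contain_copy)
  fix E assume E: "E \<subseteq># snd (block_sunflower (card T) p m q)" "size (snd F) < size E"
  have "E \<subseteq># image_mset (block_edge (card T) p) (mset_set {..<m})"
    using E(1) by (simp add: block_sunflower_def)
  then obtain N where N: "N \<subseteq># mset_set {..<m}" "E = image_mset (block_edge (card T) p) N"
    using submultiset_image_mset by blast
  define J where "J = set_mset N"
  have "N = mset_set J" unfolding J_def using submultiset_mset_set[OF N(1)] .
  moreover have "J \<subseteq> {..<m}" unfolding J_def using N(1) by (metis finite_lessThan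
        finite_set_mset_mset_set set_mset_mono)
  ultimately have "contains_copy (fst (block_sunflower (card T) p m q), E) F"
    using contains_copy_block_edges[OF assms(2,3), of J m q] E(2) N(2) assms(4)
    by (simp add: block_sunflower_def)
  then show "\<exists>F\<in>Hs. contains_copy (fst (block_sunflower (card T) p m q), E) F"
    using assms(1) by blast
qed

lemma sunflower_admits_large_hosts:
  assumes "1 \<le> r" "F \<in> Hs" "uniform r F" "sunflower F" "size (snd F) < k"
  shows "\<exists>G :: nat hg. uniform r G \<and> n \<le> size (snd G) \<and> ex_num G Hs < k \<and>
           (simple_hg F \<longrightarrow> simple_hg G)"
proof -
  obtain T where T: "sunflower_kernel F T" "card T \<le> r" "simple_hg F \<longrightarrow> card T < r"
    using sunflower_kernel_exists[OF assms(4,3,1)] by blast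
  define G where "G = block_sunflower (card T) (r - card T) n (card (fst F))"
  have "uniform r G"
    using uniform_block_sunflower[of "card T" "r - card T"] T(2) by (simp add: G_def)
  moreover have "n \<le> size (snd G)" by (simp add: G_def size_block_sunflower)
  moreover have "ex_num G Hs \<le> size (snd F)"
    unfolding G_def using assms(3) T(2)
    by (intro ex_num_block_sunflower_le[OF assms(2) _ T(1)]) auto
  then have "ex_num G Hs < k" using assms(5) by simp
  moreover have "simple_hg F \<longrightarrow> simple_hg G"
    using T(3) simple_block_sunflower by (simp add: G_def)
  ultimately show ?thesis by blast
qed

lemma Sup_sizes_eq_infinity:
  fixes P :: "'a hg \<Rightarrow> bool"
  assumes "\<And>n. \<exists>G. P G \<and> n \<le> size (snd G)"
  shows "Sup {enat (size (snd G)) |G. P G} = \<infinity>"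
proof (rule ccontr)
  let ?S = "{enat (size (snd G)) |G. P G}"
  assume "Sup ?S \<noteq> \<infinity>"
  then obtain N where N: "Sup ?S = enat N" by (cases "Sup ?S") auto
  obtain G where "P G" "Suc N \<le> size (snd G)" using assms by blast
  then have "enat (Suc N) \<le> Sup ?S"
    by (intro Sup_upper2[of "enat (size (snd G))"]) (blast, simp)
  then show False using N by simp
qed

lemma E_star_eq_infinity:
  assumes "1 \<le> r" "F \<in> Hs" "uniform r F" "sunflower F" "size (snd F) < k"
  shows "E_star r Hs k = \<infinity>"
  unfolding E_star_def
  by (rule Sup_sizes_eq_infinity) (use sunflower_admits_large_hosts[OF assms] in blast)

lemma E_simple_eq_infinity:
  assumes "1 \<le> r" "F \<in> Hs" "uniform r F" "sunflower F" "size (snd F) < k" "simple_hg F"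
  shows "E_simple r Hs k = \<infinity>"
  unfolding E_simple_def
  by (rule Sup_sizes_eq_infinity)
    (use sunflower_admits_large_hosts[OF assms(1-5)] assms(6) in blast)

theorem proposition2p2:
  fixes r :: nat and Hs :: "'b hg set"
  assumes "r \<ge> 1" and "\<forall>F\<in>Hs. uniform r F"
  shows "((\<exists>k0. \<forall>k\<ge>k0. E_star r Hs k = \<infinity>) \<longleftrightarrow> (\<exists>F\<in>Hs. sunflower F))
       \<and> ((\<forall>F\<in>Hs. simple_hg F) \<longrightarrow>
           ((\<exists>k0. \<forall>k\<ge>k0. E_simple r Hs k = \<infinity>) \<longleftrightarrow> (\<exists>F\<in>Hs. sunflower F)))"
proof -
  have E_star_finite: "E_star r Hs k \<noteq> \<infinity>" if "\<not> (\<exists>F\<in>Hs. sunflower F)" for k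
    using E_star_le_if_sunflower_free[OF assms(2) that, of k] by (metis infinity_ileE)
  have E_simple_finite: "E_simple r Hs k \<noteq> \<infinity>" if "\<not> (\<exists>F\<in>Hs. sunflower F)" for k
    using E_star_finite[OF that, of k] E_simple_le_E_star[of r Hs k]
    by (metis enat_ord_simps(5))
  have eventually_infinite:
    "\<exists>k0. \<forall>k\<ge>k0. E_star r Hs k = \<infinity> \<and> ((\<forall>F\<in>Hs. simple_hg F) \<longrightarrow> E_simple r Hs k = \<infinity>)"
    if "F \<in> Hs" "sunflower F" for F
  proof (intro exI allI impI conjI)
    fix k assume "Suc (size (snd F)) \<le> k"
    then have "size (snd F) < k" by simp
    then show "E_star r Hs k = \<infinity>"
      using E_star_eq_infinity[OF assms(1) that(1) _ that(2)] assms(2) that(1) by blast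
    show "E_simple r Hs k = \<infinity>" if "\<forall>F\<in>Hs. simple_hg F"
      using E_simple_eq_infinity[OF assms(1) \<open>F \<in> Hs\<close> _ \<open>sunflower F\<close> \<open>size (snd F) < k\<close>]
        assms(2) \<open>F \<in> Hs\<close> that by blast
  qed
  show ?thesis
    using E_star_finite E_simple_finite eventually_infinite by (meson order_refl)
qed

end
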